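(* Let $P$ be a probability distribution of $\xi$, $\mathcal X\subseteq\mathbb R^d$, $\lambda>0$. Assume: (i) for every $\xi$, $x\mapsto\ell(x;\xi)$ is $G$-Lipschitz and $L$-smooth on $\mathcal X$; (ii) $\psi:\mathbb R\to[0,+\infty]$ is convex, $\psi(1)=0$, $\psi(t)=+\infty$ for $t<0$, and $\psi^*(t)=\sup_s(st-\psi(s))$ is $M$-smooth. Let $\mathcal L(x,\eta)=\mathbb E_\xi[\lambda\psi^*((\ell(x;\xi)-\eta)/\lambda)+\eta]$. Then for any $x$ and any $\eta_1,\eta_2\in\arg\min_\eta\mathcal L(x,\eta)$, $\nabla_x\mathcal L(x,\eta_1)=\nabla_x\mathcal L(x,\eta_2)$. *)

theory Defs
  imports "HOL-Probability.Probability"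
begin

text \<open>Gradient of a real-valued function on a Euclidean space (the vector g with
  derivative h \<mapsto> g \<bullet> h at x); unspecified if f is not differentiable at x.\<close>
definition grad :: "('a::euclidean_space \<Rightarrow> real) \<Rightarrow> 'a \<Rightarrow> 'a" where
  "grad f x = (SOME g. (f has_derivative (\<lambda>h. g \<bullet> h)) (at x))"

definition smooth_on :: "real \<Rightarrow> 'a::euclidean_space set \<Rightarrow> ('a \<Rightarrow> real) \<Rightarrow> bool" where
  "smooth_on L X f \<longleftrightarrow> (\<forall>x\<in>X. f differentiable (at x)) \<and>
     (\<forall>x\<in>X. \<forall>y\<in>X. norm (grad f x - grad f y) \<le> L * norm (x - y))"

definition smooth_real :: "real \<Rightarrow> (real \<Rightarrow> real) \<Rightarrow> bool" where
  "smooth_real M f \<longleftrightarrow> (\<forall>t. f differentiable (at t)) \<and>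
     (\<forall>s t. \<bar>deriv f s - deriv f t\<bar> \<le> M * \<bar>s - t\<bar>)"

definition ereal_convex :: "(real \<Rightarrow> ereal) \<Rightarrow> bool" where
  "ereal_convex f \<longleftrightarrow> (\<forall>x y u. 0 \<le> u \<and> u \<le> 1 \<longrightarrow>
     f (u * x + (1 - u) * y) \<le> ereal u * f x + ereal (1 - u) * f y)"

definition conj :: "(real \<Rightarrow> ereal) \<Rightarrow> real \<Rightarrow> ereal" where
  "conj \<psi> t = (SUP s. ereal (s * t) - \<psi> s)"

definition objL :: "'b measure \<Rightarrow> real \<Rightarrow> (real \<Rightarrow> real) \<Rightarrow> ('a \<Rightarrow> 'b \<Rightarrow> real) \<Rightarrow> 'a \<Rightarrow> real \<Rightarrow> real" where
  "objL P lam psis l x \<eta> = (\<integral>\<xi>. lam * psis ((l x \<xi> - \<eta>) / lam) + \<eta> \<partial>P)"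

end

theory Submission
  imports Defs
begin

(* With t_i = (l(x;xi) - eta_i)/lam, the objective at the midpoint (eta_1 + eta_2)/2 differs from
   the mean of the two minimal values by lam times the expected convexity gap of psi* between t_1
   and t_2. Minimality makes this nonpositive and convexity of psi* (a conjugate) nonnegative, so
   psi* satisfies the midpoint equality at (t_1, t_2) almost surely, and a differentiable convex
   function can only do so where its derivatives at t_1 and t_2 agree. A second-order Taylor bound
   for psi*, with the G-Lipschitz continuity of l, then gives
   |D y - D x| <= (2 M G^2 / lam) |y - x|^2 for D y = L(y, eta_1) - L(y, eta_2), so D has derivative
   0 at x. This does not require L(., eta_i) to be differentiable: the two gradients, chosen by
   SOME, coincide in any case. *)

lemma convex_on_conj:
  fixes \<psi> :: "real \<Rightarrow> ereal" and \<psi>s :: "real \<Rightarrow> real"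
  assumes conj_eq: "\<And>t. conj \<psi> t = ereal (\<psi>s t)"
  shows "convex_on UNIV \<psi>s"
proof (rule convex_onI)
  fix u a b :: real
  assume u: "0 < u" "u < 1"
  have affine_le: "ereal (s * t) - \<psi> s \<le> ereal (\<psi>s t)" for s t
    unfolding conj_eq[symmetric] conj_def by (rule SUP_upper) simp
  have "ereal (s * ((1 - u) * a + u * b)) - \<psi> s \<le> ereal ((1 - u) * \<psi>s a + u * \<psi>s b)" for s
  proof (cases "\<psi> s")
    case (real p)
    have "s * ((1 - u) * a + u * b) - p = (1 - u) * (s * a - p) + u * (s * b - p)"
      by (simp add: algebra_simps)
    also have "\<dots> \<le> (1 - u) * \<psi>s a + u * \<psi>s b"
      using affine_le[of s a] affine_le[of s b] u real
      by (intro add_mono mult_left_mono) auto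
    finally show ?thesis using real by simp
  next
    case MInf
    then show ?thesis using affine_le[of s a] by simp
  qed simp
  then have "conj \<psi> ((1 - u) * a + u * b) \<le> ereal ((1 - u) * \<psi>s a + u * \<psi>s b)"
    unfolding conj_def by (intro SUP_least)
  then show "\<psi>s ((1 - u) *\<^sub>R a + u *\<^sub>R b) \<le> (1 - u) * \<psi>s a + u * \<psi>s b"
    by (simp add: conj_eq)
qed simp

lemma convex_midpoint_eq_imp_deriv_eq:
  fixes f :: "real \<Rightarrow> real"
  assumes convex: "convex_on UNIV f" and diff: "\<And>t. f differentiable (at t)"
    and midpoint: "f ((a + b) / 2) = (f a + f b) / 2"
  shows "deriv f a = deriv f b"
proof -
  define m where "m = (a + b) / 2"
  have deriv: "(f has_real_derivative deriv f t) (at t)" for t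
    using diff by (simp add: DERIV_deriv_iff_real_differentiable)
  have tangent: "deriv f m * (t - m) \<le> f t - f m" for t
    by (rule convex_on_imp_above_tangent[OF convex _ _ _ deriv]) auto
  have on_tangent: "f t = f m + deriv f m * (t - m)" if "t = a \<or> t = b" for t
    using tangent[of a] tangent[of b] midpoint that unfolding m_def by (auto simp: field_simps)
  have "deriv f t = deriv f m" if "t = a \<or> t = b" for t
  proof -
    have "deriv f t - deriv f m = 0"
    proof (rule DERIV_local_min[OF _ zero_less_one])
      show "((\<lambda>s. f s - f m - deriv f m * (s - m)) has_real_derivative deriv f t - deriv f m) (at t)"
        by (auto intro!: derivative_eq_intros deriv)
      \<comment> \<open>f minus its tangent at m is nonnegative and vanishes at a and b\<close>
      show "\<forall>s. \<bar>t - s\<bar> < 1 \<longrightarrow> f t - f m - deriv f m * (t - m) \<le> f s - f m - deriv f m * (s - m)"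
        using on_tangent[OF that] tangent by auto
    qed
    then show ?thesis by simp
  qed
  then show ?thesis by simp
qed

lemma smooth_real_nonneg:
  assumes "smooth_real M f"
  shows "M \<ge> 0"
proof -
  have "\<bar>deriv f 1 - deriv f 0\<bar> \<le> M * \<bar>1 - 0\<bar>"
    using assms unfolding smooth_real_def by blast
  then have "\<bar>deriv f 1 - deriv f 0\<bar> \<le> M"
    by simp
  then show ?thesis
    by (rule order_trans[OF abs_ge_zero])
qed

lemma smooth_real_taylor_bound:
  assumes "smooth_real M f"
  shows "\<bar>f (t + \<delta>) - f t - deriv f t * \<delta>\<bar> \<le> M * \<delta>\<^sup>2"
proof -
  have diff: "\<And>s. f differentiable (at s)" and lip: "\<And>r s. \<bar>deriv f r - deriv f s\<bar> \<le> M * \<bar>r - s\<bar>"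
    using assms unfolding smooth_real_def by auto
  have shifted: "((\<lambda>r. f (t + r)) has_real_derivative deriv f (t + r)) (at r)" for r
    using DERIV_shift[of f "deriv f (t + r)" r t] diff
    by (simp add: add.commute DERIV_deriv_iff_real_differentiable)
  define D where "D n r = (if n = 0 then f (t + r) else deriv f (t + r))" for n :: nat and r
  have "\<exists>s. \<bar>s\<bar> \<le> \<bar>\<delta>\<bar> \<and> D 0 \<delta> = (\<Sum>n<1. D n 0 / fact n * \<delta> ^ n) + D 1 s / fact 1 * \<delta> ^ 1"
    by (rule Maclaurin_bi_le) (auto simp: D_def shifted)
  then obtain s where s: "\<bar>s\<bar> \<le> \<bar>\<delta>\<bar>" and mvt: "f (t + \<delta>) = f t + deriv f (t + s) * \<delta>"
    by (auto simp: D_def)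
  have "\<bar>f (t + \<delta>) - f t - deriv f t * \<delta>\<bar> = \<bar>deriv f (t + s) - deriv f t\<bar> * \<bar>\<delta>\<bar>"
    by (simp add: mvt left_diff_distrib flip: abs_mult)
  also have "\<dots> \<le> (M * \<bar>\<delta>\<bar>) * \<bar>\<delta>\<bar>"
    using lip[of "t + s" t] s smooth_real_nonneg[OF assms]
    by (intro mult_right_mono) (auto intro: order_trans mult_left_mono)
  finally show ?thesis by (simp add: power2_eq_square)
qed

lemma smooth_real_increment_diff_bound:
  assumes "smooth_real M f" and "deriv f a = deriv f b"
  shows "\<bar>(f (a + \<delta>) - f a) - (f (b + \<delta>) - f b)\<bar> \<le> 2 * M * \<delta>\<^sup>2"
  using smooth_real_taylor_bound[OF assms(1), of a \<delta>] smooth_real_taylor_bound[OF assms(1), of b \<delta>]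
    assms(2)
  by (simp add: abs_le_iff)

lemma has_derivative_zero_if_quadratic_bound:
  fixes f :: "'a::real_normed_vector \<Rightarrow> 'b::real_normed_vector"
  assumes "eventually (\<lambda>y. norm (f y - f x) \<le> C * (norm (y - x))\<^sup>2) (at x)"
  shows "(f has_derivative (\<lambda>h. 0)) (at x)"
  unfolding has_derivative_iff_norm
proof (intro conjI bounded_linear_zero)
  have pointwise: "norm (norm (f y - f x - 0) / norm (y - x)) \<le> C * norm (y - x)"
    if "norm (f y - f x) \<le> C * (norm (y - x))\<^sup>2" and "y \<noteq> x" for y
    using that by (simp add: divide_le_eq power2_eq_square mult.assoc)
  have "eventually (\<lambda>y. norm (norm (f y - f x - 0) / norm (y - x)) \<le> C * norm (y - x)) (at x)"
    using assms eventually_neq_at_within[of x x UNIV] by eventually_elim (rule pointwise)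
  moreover have "((\<lambda>y. C * norm (y - x)) \<longlongrightarrow> 0) (at x)"
    by (auto intro!: tendsto_eq_intros)
  ultimately show "((\<lambda>y. norm (f y - f x - 0) / norm (y - x)) \<longlongrightarrow> 0) (at x)"
    by (rule Lim_null_comparison)
qed

lemma grad_eq_if_diff_has_derivative_zero:
  assumes "((\<lambda>y. f y - g y) has_derivative (\<lambda>h. 0)) (at x)"
  shows "grad f x = grad g x"
proof -
  have "(f has_derivative (\<lambda>h. v \<bullet> h)) (at x) \<longleftrightarrow> (g has_derivative (\<lambda>h. v \<bullet> h)) (at x)" for v
  proof
    assume "(f has_derivative (\<lambda>h. v \<bullet> h)) (at x)"
    from has_derivative_diff[OF this assms] show "(g has_derivative (\<lambda>h. v \<bullet> h)) (at x)"
      by simp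
  next
    assume "(g has_derivative (\<lambda>h. v \<bullet> h)) (at x)"
    from has_derivative_add[OF this assms] show "(f has_derivative (\<lambda>h. v \<bullet> h)) (at x)"
      by simp
  qed
  then show ?thesis
    unfolding grad_def by simp
qed

lemma objL_minimizers_AE_deriv_eq:
  fixes P :: "'b measure" and f :: "real \<Rightarrow> real"
  assumes convex: "convex_on UNIV f" and diff: "\<And>t. f differentiable (at t)" and lam: "lam > 0"
    and integrable: "\<And>\<eta>. integrable P (\<lambda>\<xi>. lam * f ((l x \<xi> - \<eta>) / lam) + \<eta>)"
    and min1: "\<And>\<eta>. objL P lam f l x \<eta>1 \<le> objL P lam f l x \<eta>"
    and min2: "\<And>\<eta>. objL P lam f l x \<eta>2 \<le> objL P lam f l x \<eta>"
  shows "AE \<xi> in P. deriv f ((l x \<xi> - \<eta>1) / lam) = deriv f ((l x \<xi> - \<eta>2) / lam)"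
proof -
  define t where "t \<eta> \<xi> = (l x \<xi> - \<eta>) / lam" for \<eta> \<xi>
  define m where "m = (\<eta>1 + \<eta>2) / 2"
  define gap where "gap \<xi> = (f (t \<eta>1 \<xi>) + f (t \<eta>2 \<xi>)) / 2 - f ((t \<eta>1 \<xi> + t \<eta>2 \<xi>) / 2)" for \<xi>
  define excess where
    "excess \<xi> = (lam * f (t \<eta>1 \<xi>) + \<eta>1 + (lam * f (t \<eta>2 \<xi>) + \<eta>2)) / 2 - (lam * f (t m \<xi>) + m)" for \<xi>
  have excess_eq: "excess \<xi> = lam * gap \<xi>" for \<xi>
  proof -
    have midpoint: "t m \<xi> = (t \<eta>1 \<xi> + t \<eta>2 \<xi>) / 2"
      unfolding t_def m_def using lam by (simp add: field_simps)
    show ?thesis unfolding excess_def gap_def midpoint by (simp add: m_def field_simps)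
  qed
  have gap_nonneg: "gap \<xi> \<ge> 0" for \<xi>
    using convex_onD[OF convex, of "1/2" "t \<eta>1 \<xi>" "t \<eta>2 \<xi>"]
    unfolding gap_def by (simp add: field_simps)
  have integrable_excess: "integrable P excess"
    unfolding excess_def t_def using integrable by auto
  have "integral\<^sup>L P excess = (objL P lam f l x \<eta>1 + objL P lam f l x \<eta>2) / 2 - objL P lam f l x m"
    unfolding excess_def objL_def t_def using integrable by simp
  also have "\<dots> \<le> 0"
    using min1[of m] min2[of m] by simp
  finally have "AE \<xi> in P. excess \<xi> = 0"
    using integral_nonneg_eq_0_iff_AE[OF integrable_excess] excess_eq gap_nonneg lam
    by (simp add: order_antisym integral_nonneg_AE)
  then show ?thesis
  proof (rule AE_mp, intro AE_I2 impI)
    fix \<xi>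
    assume "excess \<xi> = 0"
    then have "f ((t \<eta>1 \<xi> + t \<eta>2 \<xi>) / 2) = (f (t \<eta>1 \<xi>) + f (t \<eta>2 \<xi>)) / 2"
      unfolding excess_eq gap_def using lam by simp
    then show "deriv f ((l x \<xi> - \<eta>1) / lam) = deriv f ((l x \<xi> - \<eta>2) / lam)"
      unfolding t_def by (rule convex_midpoint_eq_imp_deriv_eq[OF convex diff])
  qed
qed

lemma objL_diff_increment_bound:
  fixes P :: "'b measure" and l :: "'a::real_normed_vector \<Rightarrow> 'b \<Rightarrow> real"
  assumes "prob_space P" and smooth: "smooth_real M f" and lam: "lam > 0"
    and lip: "\<And>\<xi>. G-lipschitz_on X (\<lambda>y. l y \<xi>)"
    and integrable: "\<And>y \<eta>. y \<in> X \<Longrightarrow> integrable P (\<lambda>\<xi>. lam * f ((l y \<xi> - \<eta>) / lam) + \<eta>)"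
    and xX: "x \<in> X" and yX: "y \<in> X"
    and deriv_eq: "AE \<xi> in P. deriv f ((l x \<xi> - \<eta>1) / lam) = deriv f ((l x \<xi> - \<eta>2) / lam)"
  shows "\<bar>(objL P lam f l y \<eta>1 - objL P lam f l y \<eta>2) - (objL P lam f l x \<eta>1 - objL P lam f l x \<eta>2)\<bar>
    \<le> 2 * M * G\<^sup>2 / lam * (norm (y - x))\<^sup>2"
proof -
  interpret prob_space P by fact
  define t where "t z \<eta> \<xi> = (l z \<xi> - \<eta>) / lam" for z \<eta> \<xi>
  define \<delta> where "\<delta> \<xi> = (l y \<xi> - l x \<xi>) / lam" for \<xi>
  define H where "H \<xi> = lam * ((f (t x \<eta>1 \<xi> + \<delta> \<xi>) - f (t x \<eta>1 \<xi>)) - (f (t x \<eta>2 \<xi> + \<delta> \<xi>) - f (t x \<eta>2 \<xi>)))"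
    for \<xi>
  have shift: "t y \<eta> \<xi> = t x \<eta> \<xi> + \<delta> \<xi>" for \<eta> \<xi>
    unfolding t_def \<delta>_def using lam by (simp add: field_simps)
  have H_eq: "H \<xi> = (lam * f (t y \<eta>1 \<xi>) + \<eta>1 - (lam * f (t y \<eta>2 \<xi>) + \<eta>2))
      - (lam * f (t x \<eta>1 \<xi>) + \<eta>1 - (lam * f (t x \<eta>2 \<xi>) + \<eta>2))" for \<xi>
    unfolding H_def shift by (simp add: algebra_simps)
  have integrable_H: "integrable P H"
    unfolding H_eq t_def by (intro Bochner_Integration.integrable_diff integrable xX yX)
  have integral_H: "integral\<^sup>L P H
      = (objL P lam f l y \<eta>1 - objL P lam f l y \<eta>2) - (objL P lam f l x \<eta>1 - objL P lam f l x \<eta>2)"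
    unfolding H_eq objL_def t_def
    by (simp only: Bochner_Integration.integral_diff Bochner_Integration.integrable_diff integrable xX yX)
  have "AE \<xi> in P. \<bar>H \<xi>\<bar> \<le> 2 * M * G\<^sup>2 / lam * (norm (y - x))\<^sup>2"
    using deriv_eq
  proof (rule AE_mp, intro AE_I2 impI)
    fix \<xi>
    assume eq: "deriv f ((l x \<xi> - \<eta>1) / lam) = deriv f ((l x \<xi> - \<eta>2) / lam)"
    have "\<bar>H \<xi>\<bar> \<le> lam * (2 * M * (\<delta> \<xi>)\<^sup>2)"
      unfolding H_def t_def using smooth_real_increment_diff_bound[OF smooth eq, of "\<delta> \<xi>"] lam
      by (simp add: abs_mult)
    also have "\<dots> \<le> lam * (2 * M * (G * norm (y - x) / lam)\<^sup>2)"
    proof -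
      have "\<bar>l y \<xi> - l x \<xi>\<bar> \<le> G * norm (y - x)"
        using lipschitz_onD[OF lip yX xX] by (simp add: dist_real_def dist_norm)
      then have "\<bar>\<delta> \<xi>\<bar> \<le> G * norm (y - x) / lam"
        unfolding \<delta>_def using lam by (simp add: abs_div divide_right_mono)
      then show ?thesis
        using lam smooth_real_nonneg[OF smooth]
        by (intro mult_left_mono power2_le_iff_abs_le[THEN iffD2]) auto
    qed
    also have "\<dots> = 2 * M * G\<^sup>2 / lam * (norm (y - x))\<^sup>2"
      using lam by (simp add: field_simps power2_eq_square)
    finally show "\<bar>H \<xi>\<bar> \<le> 2 * M * G\<^sup>2 / lam * (norm (y - x))\<^sup>2" .
  qed
  then have "integral\<^sup>L P (\<lambda>\<xi>. \<bar>H \<xi>\<bar>) \<le> 2 * M * G\<^sup>2 / lam * (norm (y - x))\<^sup>2"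
    using integrable_H by (intro integral_le_const) auto
  then show ?thesis
    unfolding integral_H[symmetric] using integral_abs_bound[of P H] by linarith
qed

theorem lemmaA6:
  fixes P :: "'b measure" and X :: "'a::euclidean_space set"
    and l :: "'a \<Rightarrow> 'b \<Rightarrow> real" and \<psi> :: "real \<Rightarrow> ereal" and \<psi>s :: "real \<Rightarrow> real"
    and lam G Lsm M :: real and x :: 'a and \<eta>1 \<eta>2 :: real
  assumes "prob_space P"
    and "open X"
    and "lam > 0"
    and "\<And>y. y \<in> X \<Longrightarrow> l y \<in> borel_measurable P"
    and "\<And>\<xi>. G-lipschitz_on X (\<lambda>y. l y \<xi>)"
    and "\<And>\<xi>. smooth_on Lsm X (\<lambda>y. l y \<xi>)"
    and "ereal_convex \<psi>"
    and "\<And>s. \<psi> s \<ge> 0"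
    and "\<psi> 1 = 0"
    and "\<And>s. s < 0 \<Longrightarrow> \<psi> s = \<infinity>"
    and "\<And>t. conj \<psi> t = ereal (\<psi>s t)"
    and "smooth_real M \<psi>s"
    and "\<And>y \<eta>. y \<in> X \<Longrightarrow> integrable P (\<lambda>\<xi>. lam * \<psi>s ((l y \<xi> - \<eta>) / lam) + \<eta>)"
    and "x \<in> X"
    and "\<And>\<eta>. objL P lam \<psi>s l x \<eta>1 \<le> objL P lam \<psi>s l x \<eta>"
    and "\<And>\<eta>. objL P lam \<psi>s l x \<eta>2 \<le> objL P lam \<psi>s l x \<eta>"
  shows "grad (\<lambda>y. objL P lam \<psi>s l y \<eta>1) x = grad (\<lambda>y. objL P lam \<psi>s l y \<eta>2) x"
proof -
  have convex: "convex_on UNIV \<psi>s"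
    using assms(11) by (rule convex_on_conj)
  have diff: "\<And>t. \<psi>s differentiable (at t)"
    using assms(12) by (simp add: smooth_real_def)
  have deriv_eq: "AE \<xi> in P. deriv \<psi>s ((l x \<xi> - \<eta>1) / lam) = deriv \<psi>s ((l x \<xi> - \<eta>2) / lam)"
    by (intro objL_minimizers_AE_deriv_eq[OF convex diff assms(3)] assms(13-16))
  have "\<forall>\<^sub>F y in at x. norm ((objL P lam \<psi>s l y \<eta>1 - objL P lam \<psi>s l y \<eta>2)
      - (objL P lam \<psi>s l x \<eta>1 - objL P lam \<psi>s l x \<eta>2)) \<le> 2 * M * G\<^sup>2 / lam * (norm (y - x))\<^sup>2"
    using eventually_at_in_open'[OF assms(2,14)]
    by eventually_elim
      (unfold real_norm_def, rule objL_diff_increment_bound[OF assms(1,12,3,5,13,14) _ deriv_eq])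
  then have "((\<lambda>y. objL P lam \<psi>s l y \<eta>1 - objL P lam \<psi>s l y \<eta>2) has_derivative (\<lambda>h. 0)) (at x)"
    by (rule has_derivative_zero_if_quadratic_bound)
  then show ?thesis
    by (rule grad_eq_if_diff_has_derivative_zero)
qed

end
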